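(* For every constant $C$ with $0<C<1/\log 4$ there exists a constant $E>0$ depending on $C$ such that, for all sufficiently large positive integers $N$ and all $x\in\left[N,\exp\!\left(C(\log N)^2\right)\right]$, \[ |\varrho_N(x)|\le\exp\!\left(-\frac{\pi^2}{400^2}\exp\!\left(E\sqrt{\log x}\right)\right). \]
   Context: For a positive integer $N$ and real $x$, $\varrho_N(x):=\prod_{n=1}^N\cos(\pi x/n)$. *)

theory Defs
  imports "HOL-Analysis.Analysis"
begin

definition rho :: "nat \<Rightarrow> real \<Rightarrow> real" where
  "rho N x = (\<Prod>n=1..N. cos (pi * x / real n))"

end

theory Submission
  imports Defs "HOL-Real_Asymp.Real_Asymp"
begin

(* Every factor of rho N x is at most 1, and |cos (pi * x / n)| <= exp (- e^2) as soon as x / n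
   is at distance at least e from the integers, so it suffices to find many n <= N with x / n far
   from the integers.

   The k-th difference of n \<mapsto> x / n is k! x / (n (n + 1) ... (n + k)). The k-th difference of
   an integer sequence is an integer, and differencing k times enlarges errors by at most 2^k.
   Hence, whenever k! x / (n ... (n + k)) lies in [1/8, 1/2], one of x / n, ..., x / (n + k) is at
   distance at least 1 / (16 * 2^k) from the integers. Writing x = X^(k+1), this happens for all n
   in a range of length about X / (k + 1) just above X, which contains about X / (k + 1)^2 disjoint
   blocks of k + 1 consecutive integers, and so
   |rho N x| <= exp (- X / (512 (k + 1)^2 4^k)) provided 4 (k + 1) X <= N.

   Finally take k + 1 = ceil (ln x / (kappa ln N)), so that X is about N^kappa <= N, where
   C ln 4 < kappa^2 < 1. The loss 4^k <= N^(C ln 4 / kappa) is then smaller than X by a power of N,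
   and a power of N is at least exp (E sqrt (ln x)) because ln x <= C (ln N)^2. *)

(* (-1)^k times the usual k-th forward difference, so that the differences of n \<mapsto> x / n are
   positive. *)
fun fdiff :: "nat \<Rightarrow> (nat \<Rightarrow> 'a::ab_group_add) \<Rightarrow> nat \<Rightarrow> 'a" where
  "fdiff 0 f n = f n"
| "fdiff (Suc k) f n = fdiff k f n - fdiff k f (Suc n)"

lemma fdiff_diff: "fdiff k (\<lambda>m. f m - g m) n = fdiff k f n - fdiff k g n"
  by (induction k arbitrary: n) auto

lemma fdiff_Ints:
  fixes f :: "nat \<Rightarrow> 'a::ring_1"
  shows "(\<And>i. i \<le> k \<Longrightarrow> f (n + i) \<in> \<int>) \<Longrightarrow> fdiff k f n \<in> \<int>"
proof (induction k arbitrary: n)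
  case 0
  then show ?case using "0.prems"[of 0] by simp
next
  case (Suc k)
  have "fdiff k f n \<in> \<int>" using Suc.prems by (intro Suc.IH) auto
  moreover have "fdiff k f (Suc n) \<in> \<int>" using Suc.prems[of "Suc _"] by (intro Suc.IH) auto
  ultimately show ?case by simp
qed

lemma abs_fdiff_less:
  fixes f :: "nat \<Rightarrow> 'a::linordered_idom"
  shows "(\<And>i. i \<le> k \<Longrightarrow> \<bar>f (n + i)\<bar> < e) \<Longrightarrow> \<bar>fdiff k f n\<bar> < 2 ^ k * e"
proof (induction k arbitrary: n)
  case 0
  then show ?case using "0.prems"[of 0] by simp
next
  case (Suc k)
  have "\<bar>fdiff k f n\<bar> < 2 ^ k * e" using Suc.prems by (intro Suc.IH) auto
  moreover have "\<bar>fdiff k f (Suc n)\<bar> < 2 ^ k * e" using Suc.prems[of "Suc _"] by (intro Suc.IH) auto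
  ultimately show ?case by simp
qed

lemma fdiff_near_Ints:
  fixes f :: "nat \<Rightarrow> 'a::linordered_idom"
  assumes "\<And>i. i \<le> k \<Longrightarrow> \<exists>a\<in>\<int>. \<bar>f (n + i) - a\<bar> < e"
  shows "\<exists>z\<in>\<int>. \<bar>fdiff k f n - z\<bar> < 2 ^ k * e"
proof -
  have "\<forall>i. \<exists>a. i \<le> k \<longrightarrow> a \<in> \<int> \<and> \<bar>f (n + i) - a\<bar> < e" using assms by blast
  then obtain a where a: "\<And>i. i \<le> k \<Longrightarrow> a i \<in> \<int> \<and> \<bar>f (n + i) - a i\<bar> < e"
    by (metis choice)
  define g where "g m = a (m - n)" for m
  have "fdiff k g n \<in> \<int>" using a by (intro fdiff_Ints) (simp add: g_def)
  moreover have "\<bar>fdiff k (\<lambda>m. f m - g m) n\<bar> < 2 ^ k * e"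
    using a by (intro abs_fdiff_less) (simp add: g_def)
  ultimately show ?thesis by (auto simp: fdiff_diff)
qed

lemma fdiff_divide:
  fixes x :: real
  assumes "n \<ge> 1"
  shows "fdiff k (\<lambda>m. x / real m) n = fact k * x / pochhammer (real n) (Suc k)"
  using assms
proof (induction k arbitrary: n)
  case (Suc k)
  define P where "P = pochhammer (real n) (Suc k)"
  define Q where "Q = pochhammer (real n + 1) (Suc k)"
  define R where "R = pochhammer (real n) (Suc (Suc k))"
  have pos: "P > 0" "Q > 0" "R > 0"
    using Suc.prems by (auto simp: P_def Q_def R_def intro!: pochhammer_pos)
  have "R = P * (real n + real k + 1)"
    unfolding P_def R_def by (subst pochhammer_Suc) simp
  then have P: "1 / P = (real n + real k + 1) / R" using pos by (simp add: field_simps)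
  have "R = real n * Q" unfolding Q_def R_def by (rule pochhammer_rec)
  then have Q: "1 / Q = real n / R" using pos Suc.prems by (simp add: field_simps)
  have "fdiff (Suc k) (\<lambda>m. x / real m) n = fact k * x * (1 / P - 1 / Q)"
    using Suc by (simp add: P_def Q_def add.commute right_diff_distrib)
  also have "\<dots> = fact (Suc k) * x / R"
    unfolding P Q by (simp add: diff_divide_distrib[symmetric] algebra_simps)
  finally show ?case unfolding R_def .
qed simp

lemma pochhammer_ge_power:
  fixes t :: "'a::linordered_semidom"
  shows "0 \<le> t \<Longrightarrow> t ^ n \<le> pochhammer t n"
  unfolding pochhammer_prod by (rule order.trans[OF _ prod_mono[of _ "\<lambda>_. t"]]) auto

lemma pochhammer_le_power:
  fixes t :: "'a::linordered_semidom"
  shows "0 \<le> t \<Longrightarrow> pochhammer t (Suc k) \<le> (t + of_nat k) ^ Suc k"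
  unfolding pochhammer_prod by (rule order.trans[OF prod_mono[of _ _ "\<lambda>_. t + of_nat k"]]) auto

lemma pochhammer_mono:
  fixes t :: "'a::linordered_semidom"
  shows "0 \<le> t \<Longrightarrow> t \<le> t' \<Longrightarrow> pochhammer t n \<le> pochhammer t' n"
  unfolding pochhammer_prod by (intro prod_mono) auto

lemma pochhammer_le_scaled:
  fixes t :: "'a::linordered_field"
  assumes "0 < t" "t \<le> t'"
  shows "pochhammer t' n \<le> (t' / t) ^ n * pochhammer t n"
proof -
  have "t' + of_nat i \<le> t' / t * (t + of_nat i)" for i
  proof -
    have "t * of_nat i \<le> t' * of_nat i" using assms by (intro mult_right_mono) auto
    then show ?thesis using assms by (simp add: field_simps)
  qed
  then have "pochhammer t' n \<le> (\<Prod>i=0..<n. t' / t * (t + of_nat i))"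
    unfolding pochhammer_prod using assms by (intro prod_mono) auto
  also have "\<dots> = (t' / t) ^ n * pochhammer t n"
    unfolding prod.distrib pochhammer_prod by simp
  finally show ?thesis .
qed

lemma exists_quotient_far_from_Ints:
  fixes x :: real
  assumes "n \<ge> 1"
    and "1/8 \<le> fact k * x / pochhammer (real n) (Suc k)" "fact k * x / pochhammer (real n) (Suc k) \<le> 1/2"
  shows "\<exists>i\<le>k. \<forall>a\<in>\<int>. 1 / (16 * 2 ^ k) \<le> \<bar>x / real (n + i) - a\<bar>"
proof (rule ccontr)
  assume "\<not> ?thesis"
  then have "\<exists>a\<in>\<int>. \<bar>x / real (n + i) - a\<bar> < 1 / (16 * 2 ^ k)" if "i \<le> k" for i
    using that by (meson not_le)
  then have "\<exists>z\<in>\<int>. \<bar>fdiff k (\<lambda>m. x / real m) n - z\<bar> < 2 ^ k * (1 / (16 * 2 ^ k))"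
    by (intro fdiff_near_Ints) simp
  then obtain z where "z \<in> \<int>" and z: "\<bar>fdiff k (\<lambda>m. x / real m) n - z\<bar> < 1 / 16"
    by auto
  then obtain j :: int where "z = of_int j" by (auto elim: Ints_cases)
  with z assms(1) have "\<bar>fact k * x / pochhammer (real n) (Suc k) - of_int j\<bar> < 1 / 16"
    by (simp add: fdiff_divide)
  with assms(2,3) have "0 < j" "j < 1" by linarith+
  then show False by simp
qed

lemma abs_cos_pi_diff_int: "\<bar>cos (pi * (y - of_int r))\<bar> = \<bar>cos (pi * y)\<bar>"
  by (simp add: right_diff_distrib cos_diff mult.commute)

lemma cos_pi_le_one_minus_square:
  fixes e :: real
  assumes "0 \<le> e" "e \<le> 1/2"
  shows "cos (pi * e) \<le> 1 - e^2"
proof -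
  define w where "w = pi * e / 2"
  have "3 * e \<le> pi * e" using assms pi_gt3 by (intro mult_right_mono) auto
  moreover have "pi * e \<le> 4 * (1/2)" using assms pi_less_4 by (intro mult_mono) auto
  ultimately have w: "0 \<le> w" "w \<le> 1" "3/2 * e \<le> w"
    using assms by (auto simp: w_def)
  have "\<bar>sin w - w\<bar> \<le> w ^ 3 / 6"
    using Maclaurin_sin_bound[of w 3] w by (simp add: numeral_3_eq_3 sin_coeff_def fact_numeral)
  then have "w - w ^ 3 / 6 \<le> sin w" unfolding abs_le_iff by linarith
  moreover have "w ^ 3 \<le> w" using power_decreasing[of 1 3 w] w by simp
  ultimately have "e \<le> sin w" using w by linarith
  then have "e^2 \<le> sin w ^ 2" using assms by (intro power_mono) auto
  moreover have "cos (pi * e) = 1 - 2 * sin w ^ 2" using cos_double_sin[of w] by (simp add: w_def)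
  ultimately show ?thesis using zero_le_power2[of e] by linarith
qed

lemma abs_cos_pi_le_exp:
  fixes y e :: real
  assumes "0 < e" "e \<le> 1/2" and far: "\<forall>a\<in>\<int>. e \<le> \<bar>y - a\<bar>"
  shows "\<bar>cos (pi * y)\<bar> \<le> exp (- (e^2))"
proof -
  define t where "t = \<bar>y - of_int (round y)\<bar>"
  have t: "e \<le> t" "t \<le> 1/2"
    using far of_int_round_abs_le[of y] by (auto simp: t_def abs_minus_commute)
  have "pi * t \<le> pi * (1/2)" using t by (intro mult_left_mono) auto
  moreover have "0 \<le> pi * t" using t assms by simp
  ultimately have "0 \<le> cos (pi * t)" using pi_gt_zero by (intro cos_ge_zero) linarith+
  moreover have "cos (pi * t) = cos (pi * (y - of_int (round y)))"
    using cos_abs_real[of "pi * (y - of_int (round y))"] by (simp add: t_def abs_mult)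
  ultimately have "\<bar>cos (pi * y)\<bar> = cos (pi * t)"
    using abs_cos_pi_diff_int[of y "round y"] by simp
  also have "\<dots> \<le> cos (pi * e)" using t assms by (intro cos_monotone_0_pi_le) auto
  also have "\<dots> \<le> 1 - e^2" using assms by (intro cos_pi_le_one_minus_square) auto
  also have "\<dots> \<le> exp (- (e^2))" using exp_ge_add_one_self[of "- (e^2)"] by linarith
  finally show ?thesis .
qed

lemma abs_rho_le_power:
  assumes "inj_on M A" "M ` A \<subseteq> {1..N}" "\<And>j. j \<in> A \<Longrightarrow> \<bar>cos (pi * x / real (M j))\<bar> \<le> c"
  shows "\<bar>rho N x\<bar> \<le> c ^ card A"
proof -
  define f where "f n = \<bar>cos (pi * x / real n)\<bar>" for n
  have "\<bar>rho N x\<bar> = (\<Prod>n=1..N. f n)" by (simp add: rho_def abs_prod f_def)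
  also have "\<dots> = (\<Prod>n\<in>{1..N} - M ` A. f n) * (\<Prod>n\<in>M ` A. f n)"
    by (rule prod.subset_diff) (use assms in auto)
  also have "\<dots> \<le> 1 * (\<Prod>n\<in>M ` A. f n)"
    by (intro mult_right_mono prod_le_1 prod_nonneg) (auto simp: f_def)
  also have "\<dots> = (\<Prod>j\<in>A. f (M j))" using assms(1) by (simp add: prod.reindex)
  also have "\<dots> \<le> (\<Prod>j\<in>A. c)" using assms(3) by (intro prod_mono) (auto simp: f_def)
  finally show ?thesis by simp
qed

lemma fact_div_pochhammer_bounds:
  fixes x :: real
  assumes "1 \<le> m" and below: "pochhammer (real m) (Suc k) < 2 * fact k * x"
    and above: "2 * fact k * x \<le> pochhammer (real m + 1) (Suc k)"
    and "m < n" "real n \<le> real m * (1 + 1 / real (Suc k))"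
  shows "1/8 \<le> fact k * x / pochhammer (real n) (Suc k)"
    and "fact k * x / pochhammer (real n) (Suc k) \<le> 1/2"
proof -
  define P where "P = pochhammer (real n) (Suc k)"
  have "0 < P" using assms by (auto simp: P_def intro!: pochhammer_pos)
  have "2 * fact k * x \<le> P"
    using above assms pochhammer_mono[of "real m + 1" "real n" "Suc k"] by (simp add: P_def)
  with \<open>0 < P\<close> show "fact k * x / P \<le> 1/2" by (simp add: field_simps)
  have "(real n / real m) ^ Suc k \<le> (1 + 1 / real (Suc k)) ^ Suc k"
    using assms by (intro power_mono) (auto simp: field_simps)
  also have "\<dots> \<le> exp (1 / real (Suc k)) ^ Suc k"
    by (intro power_mono) (auto simp: add.commute exp_ge_add_one_self)
  also have "\<dots> = exp (real (Suc k) * (1 / real (Suc k)))" by (rule exp_of_nat_mult[symmetric])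
  also have "\<dots> = exp 1" by simp
  also have "\<dots> \<le> 4" using exp_le by simp
  finally have "(real n / real m) ^ Suc k \<le> 4" .
  have "P \<le> (real n / real m) ^ Suc k * pochhammer (real m) (Suc k)"
    unfolding P_def using assms by (intro pochhammer_le_scaled) auto
  also have "\<dots> \<le> 4 * pochhammer (real m) (Suc k)"
    using \<open>(real n / real m) ^ Suc k \<le> 4\<close> assms
    by (intro mult_right_mono) (auto intro!: pochhammer_nonneg)
  also have "\<dots> \<le> 4 * (2 * fact k * x)" using below by (intro mult_left_mono) auto
  finally have "P \<le> 4 * (2 * fact k * x)" .
  with \<open>0 < P\<close> show "1/8 \<le> fact k * x / P" by (simp add: field_simps)
qed

lemma exists_pochhammer_threshold:
  fixes X :: real
  assumes "real k + 2 \<le> X"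
  shows "\<exists>m\<ge>1. pochhammer (real m) (Suc k) < 2 * fact k * X ^ Suc k
    \<and> 2 * fact k * X ^ Suc k \<le> pochhammer (real m + 1) (Suc k)
    \<and> X - real (Suc k) \<le> real m \<and> real m \<le> 2 * real (Suc k) * X"
proof -
  define T where "T = 2 * fact k * X ^ Suc k"
  define B where "B = nat \<lceil>2 * real (Suc k) * X\<rceil>"
  have "X > 0" using assms by linarith
  have B: "2 * real (Suc k) * X \<le> real B" "real B \<le> 2 * real (Suc k) * X + 1"
    using \<open>X > 0\<close> by (auto simp: B_def of_nat_nat)
  have "2 * fact k \<le> (2::real) ^ Suc k * real (Suc k) ^ Suc k"
  proof (rule mult_mono)
    have "fact k \<le> (fact (Suc k) :: real)" by (intro fact_mono) auto
    also have "\<dots> \<le> real (Suc k) ^ Suc k"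
      using fact_le_power[of "Suc k", where 'a=real] by (simp only: of_nat_power)
    finally show "fact k \<le> real (Suc k) ^ Suc k" .
  qed auto
  then have "T \<le> 2 ^ Suc k * real (Suc k) ^ Suc k * X ^ Suc k"
    unfolding T_def using \<open>X > 0\<close> by (intro mult_right_mono) auto
  also have "\<dots> = (2 * real (Suc k) * X) ^ Suc k" by (simp only: power_mult_distrib)
  also have "\<dots> \<le> real B ^ Suc k" using B \<open>X > 0\<close> by (intro power_mono) auto
  also have "\<dots> \<le> pochhammer (real B) (Suc k)" by (intro pochhammer_ge_power) simp
  finally have TB: "T \<le> pochhammer (real B) (Suc k)" .
  define n0 where "n0 = (LEAST n. T \<le> pochhammer (real n) (Suc k))"
  have n0: "T \<le> pochhammer (real n0) (Suc k)" "n0 \<le> B"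
    unfolding n0_def using TB by (auto intro: LeastI Least_le)
  have "(1::real) \<le> 2 * fact k" using fact_ge_1[of k, where 'a=real] by linarith
  then have "X ^ Suc k \<le> T"
    unfolding T_def using mult_right_mono[of 1 "2 * fact k" "X ^ Suc k"] \<open>X > 0\<close> by simp
  also have "\<dots> \<le> (real n0 + real k) ^ Suc k"
    using n0 pochhammer_le_power[of "real n0" k] by simp
  finally have "X \<le> real n0 + real k" by (rule power_le_imp_le_base) simp
  then obtain m where m: "n0 = Suc m" "1 \<le> m" using assms by (cases n0) auto
  have "\<not> T \<le> pochhammer (real m) (Suc k)"
    using not_less_Least[of m "\<lambda>n. T \<le> pochhammer (real n) (Suc k)"] m by (simp add: n0_def)
  moreover have "real m \<le> 2 * real (Suc k) * X" using n0 B m by linarith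
  ultimately show ?thesis
    using m n0 \<open>X \<le> real n0 + real k\<close> by (intro exI[of _ m]) (auto simp: T_def add.commute)
qed

lemma exists_far_in_block:
  fixes x :: real
  assumes "1 \<le> m" and "pochhammer (real m) (Suc k) < 2 * fact k * x"
    and "2 * fact k * x \<le> pochhammer (real m + 1) (Suc k)"
    and "(j + 1) * Suc k ^ 2 \<le> m"
  shows "\<exists>i\<le>k. \<forall>a\<in>\<int>. 1 / (16 * 2 ^ k) \<le> \<bar>x / real (m + 1 + j * Suc k + i) - a\<bar>"
proof -
  have "(1 + j * Suc k) * Suc k \<le> (j + 1) * Suc k ^ 2" by (simp add: power2_eq_square algebra_simps)
  then have "real ((1 + j * Suc k) * Suc k) \<le> real m" using assms(4) by linarith
  then have "real (m + 1 + j * Suc k) \<le> real m * (1 + 1 / real (Suc k))"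
    by (simp add: field_simps)
  then show ?thesis
    using assms by (intro exists_quotient_far_from_Ints fact_div_pochhammer_bounds[of m k x]) auto
qed

lemma abs_rho_le_blocks:
  fixes x :: real
  assumes "1 \<le> m" and "pochhammer (real m) (Suc k) < 2 * fact k * x"
    and "2 * fact k * x \<le> pochhammer (real m + 1) (Suc k)"
    and "2 * m \<le> N"
  shows "\<bar>rho N x\<bar> \<le> exp (- (real (m div (Suc k) ^ 2) / (256 * 4 ^ k)))"
proof -
  define K where "K = Suc k"
  define J where "J = m div K ^ 2"
  define e :: real where "e = 1 / (16 * 2 ^ k)"
  have JK: "J * K ^ 2 \<le> m" by (simp add: J_def)
  have "(j + 1) * K ^ 2 \<le> m" if "j < J" for j
  proof -
    have "(j + 1) * K ^ 2 \<le> J * K ^ 2" using that by (intro mult_right_mono) auto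
    with JK show ?thesis by linarith
  qed
  then have "\<forall>j. \<exists>i. j < J \<longrightarrow>
      i \<le> k \<and> (\<forall>a\<in>\<int>. e \<le> \<bar>x / real (m + 1 + j * K + i) - a\<bar>)"
    unfolding e_def K_def using assms exists_far_in_block by blast
  then obtain I where I: "\<And>j. j < J \<Longrightarrow>
      I j \<le> k \<and> (\<forall>a\<in>\<int>. e \<le> \<bar>x / real (m + 1 + j * K + I j) - a\<bar>)"
    by (metis choice)
  define M where "M j = m + 1 + j * K + I j" for j
  have "(M j - (m + 1)) div K = j" if "j < J" for j
  proof -
    have "I j < K" using I[OF that] by (simp add: K_def)
    then show ?thesis by (simp add: M_def)
  qed
  then have "inj_on M {..<J}" by (metis inj_onI lessThan_iff)
  moreover have "M j \<in> {1..N}" if "j < J" for j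
  proof -
    have "M j \<le> m + (j + 1) * K" using I[OF that] by (simp add: M_def K_def)
    also have "\<dots> \<le> m + J * K ^ 2"
      using that by (intro add_left_mono order.trans[OF mult_right_mono mult_left_mono])
        (auto simp: power2_eq_square K_def)
    finally show ?thesis using JK assms by (simp add: M_def)
  qed
  moreover have "(1::real) \<le> 2 ^ k" by simp
  then have "1 \<le> 8 * (2::real) ^ k" by linarith
  then have "0 < e" "e \<le> 1/2" unfolding e_def by (simp_all add: field_simps)
  then have "\<bar>cos (pi * x / real (M j))\<bar> \<le> exp (- (e ^ 2))" if "j < J" for j
    using I[OF that] unfolding M_def times_divide_eq_right[symmetric] by (intro abs_cos_pi_le_exp) auto
  ultimately have "\<bar>rho N x\<bar> \<le> exp (- (e ^ 2)) ^ card {..<J}"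
    by (intro abs_rho_le_power) auto
  also have "\<dots> = exp (- (real J * e ^ 2))" by (simp flip: exp_of_nat_mult)
  also have "e ^ 2 = 1 / (256 * 4 ^ k)"
  proof -
    have "((2::real) ^ k) ^ 2 = 4 ^ k" by (simp add: power2_eq_square flip: power_mult_distrib)
    then show ?thesis by (simp add: e_def power_divide power_mult_distrib)
  qed
  finally show ?thesis by (simp add: J_def K_def)
qed

lemma abs_rho_le_root:
  fixes X :: real
  assumes "2 * (real (Suc k) + real (Suc k) ^ 2) \<le> X" and "4 * real (Suc k) * X \<le> real N"
  shows "\<bar>rho N (X ^ Suc k)\<bar> \<le> exp (- (X / (512 * real (Suc k) ^ 2 * 4 ^ k)))"
proof -
  define K where "K = real (Suc k)"
  have "real k + 2 \<le> 2 * (real (Suc k) + real (Suc k) ^ 2)" by simp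
  then have "real k + 2 \<le> X" using assms(1) by linarith
  then obtain m where "1 \<le> m"
    and below: "pochhammer (real m) (Suc k) < 2 * fact k * X ^ Suc k"
    and above: "2 * fact k * X ^ Suc k \<le> pochhammer (real m + 1) (Suc k)"
    and m: "X - K \<le> real m" "real m \<le> 2 * K * X"
    unfolding K_def using exists_pochhammer_threshold by blast
  have "real (2 * m) \<le> real N"
    using m(2) assms(2) unfolding K_def by (simp only: of_nat_mult of_nat_numeral)
  then have "2 * m \<le> N" by (simp only: of_nat_le_iff)
  define q where "q = Suc k ^ 2"
  define J where "J = m div q"
  from \<open>1 \<le> m\<close> below above \<open>2 * m \<le> N\<close>
  have bound: "\<bar>rho N (X ^ Suc k)\<bar> \<le> exp (- (real J / (256 * 4 ^ k)))"
    unfolding J_def q_def by (rule abs_rho_le_blocks)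
  have "m mod q < q" by (simp add: q_def)
  then have "m < J * q + q" using div_mult_mod_eq[of m q] unfolding J_def by linarith
  then have "real m < real (J * q + q)" by (simp only: of_nat_less_iff)
  also have "\<dots> = real J * K ^ 2 + K ^ 2" by (simp add: K_def q_def)
  finally have "real m < real J * K ^ 2 + K ^ 2" .
  moreover have "2 * K + 2 * K ^ 2 \<le> X" using assms(1) unfolding K_def by (simp only: distrib_left)
  ultimately have "X / 2 \<le> real J * K ^ 2" using m(1) by linarith
  have "X / (512 * K ^ 2 * 4 ^ k) = (X / 2) / (K ^ 2 * (256 * 4 ^ k))" by simp
  also have "\<dots> \<le> (real J * K ^ 2) / (K ^ 2 * (256 * 4 ^ k))"
    using \<open>X / 2 \<le> real J * K ^ 2\<close> by (intro divide_right_mono) auto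
  also have "\<dots> = real J / (256 * 4 ^ k)" by (simp add: K_def)
  finally have "exp (- (real J / (256 * 4 ^ k))) \<le> exp (- (X / (512 * real (Suc k) ^ 2 * 4 ^ k)))"
    unfolding K_def by simp
  with bound show ?thesis by linarith
qed

(* For X = exp (s * L / K) the right-hand side is ln (X / 4^(K - 1)); the hypothesis
   C' * ln 4 < 1 (i.e. C ln 4 < kappa^2) is what makes this gain linear in L. *)
lemma exponent_gain:
  fixes s K L \<delta> C' :: real
  assumes "0 < C'" "C' * ln 4 = 1 - \<delta>" "0 < \<delta>" "0 < L"
    and "1 \<le> s" "s \<le> C' * L" "s \<le> K" "K < s + 1"
  shows "\<delta> * L / 2 - 2 / \<delta> * ln 4 \<le> s * L / K - (K - 1) * ln 4"
proof -
  have "(K - 1) * ln 4 \<le> s * ln 4" using assms by (intro mult_right_mono) auto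
  moreover have "L * s / (s + 1) \<le> s * L / K"
    using assms by (simp add: mult.commute divide_left_mono)
  moreover have "L / 2 \<le> L * s / (s + 1)" using assms by (simp add: field_simps)
  moreover have "L * s / (s + 1) = L - L / (s + 1)" using assms by (simp add: field_simps)
  moreover consider "2 / \<delta> \<le> s" | "s < 2 / \<delta>" by linarith
  then have "\<delta> * L / 2 - 2 / \<delta> * ln 4 \<le> L * s / (s + 1) - s * ln 4"
  proof cases
    case 1
    then have "2 \<le> \<delta> * (s + 1)" using assms by (simp add: field_simps)
    then have "2 * L \<le> \<delta> * (s + 1) * L" using assms by (intro mult_right_mono) auto
    then have "L / (s + 1) \<le> \<delta> * L / 2" using assms by (simp add: field_simps)
    moreover have "s * ln 4 \<le> C' * L * ln 4" using assms by (intro mult_right_mono) auto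
    moreover have "C' * L * ln 4 = L * (C' * ln 4)" by (simp add: ac_simps)
    then have "C' * L * ln 4 = L - \<delta> * L" using assms(2) by (simp add: algebra_simps)
    moreover have "0 \<le> 2 / \<delta> * ln 4" using assms by simp
    ultimately show ?thesis using \<open>L * s / (s + 1) = L - L / (s + 1)\<close> by linarith
  next
    case 2
    then have "s * ln 4 \<le> 2 / \<delta> * ln 4" by (intro mult_right_mono) auto
    moreover have "0 < C' * ln 4" using assms(1) by simp
    then have "\<delta> * L \<le> 1 * L" using assms(2,4) by (intro mult_right_mono) auto
    ultimately show ?thesis using \<open>L / 2 \<le> L * s / (s + 1)\<close> by linarith
  qed
  ultimately show ?thesis by linarith
qed

lemma exp_sqrt_le_root_quotient:
  fixes C' \<delta> L s :: real
  assumes C': "0 < C'" "C' * ln 4 = 1 - \<delta>" and "0 < \<delta>" "0 < L"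
    and s: "1 \<le> s" "s \<le> C' * L" "s \<le> real (Suc k)" "real (Suc k) < s + 1"
    and gain: "ln 512 + 2 / \<delta> * ln 4 + 2 * ln (C' * L + 1) \<le> \<delta> * L / 4"
  shows "exp (\<delta> / (4 * sqrt C') * sqrt (s * L))
    \<le> exp (s * L / real (Suc k)) / (512 * real (Suc k) ^ 2 * 4 ^ k)"
proof -
  define K where "K = real (Suc k)"
  define D where "D = 512 * K ^ 2 * 4 ^ k"
  have "sqrt (s * L) \<le> sqrt (C' * L ^ 2)"
    using s \<open>0 < L\<close> by (simp add: power2_eq_square mult_right_mono mult.assoc[symmetric])
  also have "\<dots> = sqrt C' * L" using C' \<open>0 < L\<close> by (simp add: real_sqrt_mult)
  finally have "\<delta> / (4 * sqrt C') * sqrt (s * L) \<le> \<delta> / (4 * sqrt C') * (sqrt C' * L)"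
    using C' \<open>0 < \<delta>\<close> by (intro mult_left_mono) auto
  also have "\<dots> = \<delta> * L / 4" using C' by (simp add: field_simps)
  finally have "\<delta> / (4 * sqrt C') * sqrt (s * L) \<le> \<delta> * L / 4" .
  moreover have "\<delta> * L / 2 - 2 / \<delta> * ln 4 \<le> s * L / K - real k * ln 4"
    using exponent_gain[OF C' \<open>0 < \<delta>\<close> \<open>0 < L\<close> s] by (simp add: K_def)
  moreover have "ln D = ln 512 + 2 * ln K + real k * ln 4"
    by (simp add: D_def K_def ln_mult ln_realpow)
  moreover have "ln K \<le> ln (C' * L + 1)" using s by (simp add: K_def)
  ultimately have "\<delta> / (4 * sqrt C') * sqrt (s * L) \<le> s * L / K - ln D" using gain by linarith
  moreover have "exp (s * L / K) / D = exp (s * L / K - ln D)" by (simp add: D_def K_def exp_diff)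
  ultimately show ?thesis by (simp add: D_def K_def)
qed

lemma abs_rho_le_exp_exp:
  fixes C' \<delta> L x :: real and N :: nat
  assumes C': "0 < C'" "C' * ln 4 = 1 - \<delta>" and "0 < \<delta>" "0 < L" "L \<le> ln (real N)"
    and x: "real N \<le> x" "ln x \<le> C' * L ^ 2"
    and gain: "ln 512 + 2 / \<delta> * ln 4 + 2 * ln (C' * L + 1) \<le> \<delta> * L / 4"
    and root_large: "2 * ((C' * L + 1) + (C' * L + 1) ^ 2) \<le> exp (L / 2)"
    and N_large: "4 * (C' * L + 1) * exp L \<le> real N"
  shows "\<bar>rho N x\<bar> \<le> exp (- exp (\<delta> / (4 * sqrt C') * sqrt (ln x)))"
proof -
  define u where "u = ln x"
  have "0 < C' * L + 1" using C' \<open>0 < L\<close> by (simp add: add_pos_nonneg)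
  then have "0 < 4 * (C' * L + 1) * exp L" by simp
  then have "0 < real N" using N_large by linarith
  then have "0 < x" "ln (real N) \<le> u" using x by (auto simp: u_def)
  then have "L \<le> u" using \<open>L \<le> ln (real N)\<close> by linarith
  define s where "s = u / L"
  have s: "1 \<le> s" "s \<le> C' * L" "s * L = u"
    using \<open>L \<le> u\<close> x(2) \<open>0 < L\<close> by (auto simp: s_def u_def field_simps power2_eq_square)
  \<comment> \<open>\<open>k + 1 = \<lceil>ln x / L\<rceil>\<close>, so that \<open>X = x powr (1 / (k + 1))\<close> lies between
    \<open>exp (L / 2)\<close> and \<open>exp L\<close>.\<close>
  define k where "k = nat \<lceil>s\<rceil> - 1"
  define K where "K = real (Suc k)"
  have "K = of_int \<lceil>s\<rceil>" using s by (simp add: K_def k_def of_nat_diff)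
  then have K: "s \<le> K" "K < s + 1" by linarith+
  define X where "X = exp (u / K)"
  have "X ^ Suc k = exp (K * (u / K))" unfolding X_def K_def by (rule exp_of_nat_mult[symmetric])
  also have "\<dots> = x" using \<open>0 < x\<close> by (simp add: K_def u_def)
  finally have "X ^ Suc k = x" .
  have "u / (s + 1) \<le> u / K" using K s \<open>L \<le> u\<close> \<open>0 < L\<close> by (intro divide_left_mono) auto
  moreover have "L / 2 \<le> u / (s + 1)" using s \<open>0 < L\<close> by (simp add: field_simps flip: s(3))
  ultimately have "L / 2 \<le> u / K" by linarith
  then have "exp (L / 2) \<le> X" by (simp add: X_def)
  have "u / K \<le> u / s" using K s \<open>L \<le> u\<close> \<open>0 < L\<close> by (intro divide_left_mono) auto
  then have "X \<le> exp L" using s \<open>0 < L\<close> by (simp add: X_def s_def)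
  have "K \<le> C' * L + 1" using K s by linarith
  then have "2 * (K + K ^ 2) \<le> 2 * ((C' * L + 1) + (C' * L + 1) ^ 2)"
    by (intro mult_left_mono add_mono power_mono) (auto simp: K_def)
  then have root: "2 * (real (Suc k) + real (Suc k) ^ 2) \<le> X"
    using root_large \<open>exp (L / 2) \<le> X\<close> by (simp add: K_def)
  have "4 * K * X \<le> 4 * (C' * L + 1) * exp L"
    using \<open>K \<le> C' * L + 1\<close> \<open>X \<le> exp L\<close> by (intro mult_mono) (auto simp: K_def X_def)
  then have size: "4 * real (Suc k) * X \<le> real N" using N_large by (simp add: K_def)
  have "\<bar>rho N x\<bar> \<le> exp (- (X / (512 * real (Suc k) ^ 2 * 4 ^ k)))"
    using abs_rho_le_root[OF root size] \<open>X ^ Suc k = x\<close> by simp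
  moreover have "exp (\<delta> / (4 * sqrt C') * sqrt u) \<le> X / (512 * real (Suc k) ^ 2 * 4 ^ k)"
    using exp_sqrt_le_root_quotient[OF C' \<open>0 < \<delta>\<close> \<open>0 < L\<close> s(1,2) K[unfolded K_def] gain]
    by (simp add: s(3) X_def K_def)
  ultimately show ?thesis unfolding u_def by (meson exp_le_cancel_iff neg_le_iff_le order_trans)
qed

lemma eventually_abs_rho_le_exp_exp:
  fixes C' \<delta> \<kappa> :: real
  assumes C': "0 < C'" "C' * ln 4 = 1 - \<delta>" and "0 < \<delta>" "0 < \<kappa>" "\<kappa> < 1"
  shows "\<forall>\<^sub>F N in sequentially. \<forall>x. real N \<le> x \<and> x \<le> exp (C' * \<kappa> ^ 2 * (ln (real N))^2) \<longrightarrow>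
           \<bar>rho N x\<bar> \<le> exp (- exp (\<delta> / (4 * sqrt C') * sqrt (ln x)))"
proof -
  define large where "large l \<longleftrightarrow> 0 < l
      \<and> ln 512 + 2 / \<delta> * ln 4 + 2 * ln (C' * (\<kappa> * l) + 1) \<le> \<delta> * (\<kappa> * l) / 4
      \<and> 2 * ((C' * (\<kappa> * l) + 1) + (C' * (\<kappa> * l) + 1) ^ 2) \<le> exp (\<kappa> * l / 2)
      \<and> 4 * (C' * (\<kappa> * l) + 1) * exp (\<kappa> * l) \<le> exp l" for l :: real
  have "\<forall>\<^sub>F l in at_top. large l"
    unfolding large_def by (intro eventually_conj) (use assms in real_asymp)+
  moreover have "filterlim (\<lambda>N. ln (real N)) at_top sequentially"
    by (rule filterlim_compose[OF ln_at_top filterlim_real_sequentially])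
  ultimately have "\<forall>\<^sub>F N in sequentially. large (ln (real N))"
    by (rule eventually_compose_filterlim)
  then show ?thesis
  proof eventually_elim
    case (elim N)
    then have "0 < ln (real N)" by (simp add: large_def)
    then have "0 < real N" by (cases N) auto
    have "\<kappa> * ln (real N) \<le> ln (real N)" using \<open>0 < ln (real N)\<close> \<open>\<kappa> < 1\<close> by simp
    show ?case
    proof (intro allI impI)
      fix x assume x: "real N \<le> x \<and> x \<le> exp (C' * \<kappa> ^ 2 * (ln (real N))^2)"
      then have "0 < x" using \<open>0 < real N\<close> by linarith
      with x have "ln x \<le> ln (exp (C' * \<kappa> ^ 2 * (ln (real N))^2))" by (intro ln_mono) auto
      then have "ln x \<le> C' * (\<kappa> * ln (real N)) ^ 2" by (simp add: power_mult_distrib mult_ac)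
      with x elim \<open>0 < real N\<close> \<open>\<kappa> * ln (real N) \<le> ln (real N)\<close> assms
      show "\<bar>rho N x\<bar> \<le> exp (- exp (\<delta> / (4 * sqrt C') * sqrt (ln x)))"
        by (intro abs_rho_le_exp_exp[OF C' \<open>0 < \<delta>\<close>, where L = "\<kappa> * ln (real N)"])
          (auto simp: large_def)
    qed
  qed
qed

lemma exists_scale_parameters:
  fixes C :: real
  assumes "0 < C" "C < 1 / ln 4"
  obtains C' \<delta> \<kappa> where "0 < C'" "C' * ln 4 = 1 - \<delta>" "0 < \<delta>" "0 < \<kappa>" "\<kappa> < 1"
    "C = C' * \<kappa> ^ 2"
proof -
  \<comment> \<open>Any \<open>\<kappa>\<close> with \<open>C ln 4 < \<kappa>\<^sup>2 < 1\<close> would do; we take the midpoint.\<close>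
  define \<theta> where "\<theta> = C * ln 4"
  have \<theta>: "0 < \<theta>" "\<theta> < 1" using assms by (auto simp: \<theta>_def field_simps)
  define \<kappa> where "\<kappa> = sqrt ((1 + \<theta>) / 2)"
  have \<kappa>: "0 < \<kappa>" "\<kappa> < 1" "\<kappa> ^ 2 = (1 + \<theta>) / 2" using \<theta> by (auto simp: \<kappa>_def)
  define C' where "C' = 2 * C / (1 + \<theta>)"
  have "C' * ln 4 = 2 * \<theta> / (1 + \<theta>)" by (simp add: C'_def \<theta>_def)
  moreover have "2 * \<theta> / (1 + \<theta>) < 1" using \<theta> by (simp add: field_simps)
  ultimately have "0 < 1 - C' * ln 4" by simp
  moreover have "0 < C'" using assms \<theta> by (simp add: C'_def)
  moreover have "C = C' * \<kappa> ^ 2" using \<theta> by (simp add: C'_def \<kappa>(3) field_simps)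
  ultimately show ?thesis using \<kappa>(1,2) by (intro that[of C' "1 - C' * ln 4" \<kappa>]) simp_all
qed

theorem proposition3p5:
  fixes C :: real
  assumes "0 < C" and "C < 1 / ln 4"
  shows "\<exists>E>0. \<forall>\<^sub>F N in sequentially.
           \<forall>x::real. real N \<le> x \<and> x \<le> exp (C * (ln (real N))^2) \<longrightarrow>
             \<bar>rho N x\<bar> \<le> exp (- (pi^2 / 400^2) * exp (E * sqrt (ln x)))"
proof -
  obtain C' \<delta> \<kappa> where params: "0 < C'" "C' * ln 4 = 1 - \<delta>" "0 < \<delta>" "0 < \<kappa>" "\<kappa> < 1"
    and C: "C = C' * \<kappa> ^ 2"
    using assms by (rule exists_scale_parameters)
  define E where "E = \<delta> / (4 * sqrt C')"
  have "0 < E" using params by (simp add: E_def)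
  have "pi ^ 2 / 400 ^ 2 \<le> (1::real)" using pi_less_4 power_mono[of pi 4 2] by simp
  then have weaken: "exp (- exp t) \<le> exp (- (pi ^ 2 / 400 ^ 2) * exp t)" for t
    by (simp add: mult_left_le_one_le)
  have "\<forall>\<^sub>F N in sequentially. \<forall>x. real N \<le> x \<and> x \<le> exp (C * (ln (real N))^2) \<longrightarrow>
      \<bar>rho N x\<bar> \<le> exp (- exp (E * sqrt (ln x)))"
    unfolding C E_def using params by (rule eventually_abs_rho_le_exp_exp)
  then have "\<forall>\<^sub>F N in sequentially. \<forall>x::real. real N \<le> x \<and> x \<le> exp (C * (ln (real N))^2) \<longrightarrow>
      \<bar>rho N x\<bar> \<le> exp (- (pi^2 / 400^2) * exp (E * sqrt (ln x)))"
    by eventually_elim (meson weaken order_trans)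
  with \<open>0 < E\<close> show ?thesis by blast
qed

end
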